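(* Let $A=(a_1,\dots,a_n,a_\bot)$ with $1\le n\le m$ and $a_1,\dots,a_n$ distinct regular items, let $w:A^{\mathrm{ground}}\to\mathbb{R}$ satisfy $w(a_1)\ge\dots\ge w(a_n)\ge w(a_\bot)$, and let $\bar u,u:A^{\mathrm{ground}}\to[0,1]$ with $\bar u(a_\bot)=u(a_\bot)=1$ satisfy $\bar u(a)\ge u(a)$ for all $a$ in $A$. Then $f(A,\bar u,w)\ge f(A,u,w)$.
   Context: $A^{\mathrm{ground}}=\{a_1,\dots,a_N,a_\bot\}$ with regular items and a virtual item $a_\bot$; $1\le m\le N$. For a sequence $A$ of distinct elements of $A^{\mathrm{ground}}$ and functions $u,w$, $f(A,u,w)=\sum_{i=1}^{|A|}\prod_{j=1}^{i-1}(1-u(A(j)))\,u(A(i))\,w(A(i))$. *)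

theory Defs
  imports "HOL-Analysis.Analysis"
begin

definition f_val :: "'a list \<Rightarrow> ('a \<Rightarrow> real) \<Rightarrow> ('a \<Rightarrow> real) \<Rightarrow> real" where
  "f_val A u w = (\<Sum>i<length A. (\<Prod>j<i. (1 - u (A ! j))) * u (A ! i) * w (A ! i))"

end

theory Submission
  imports Defs
begin

text \<open>Peeling off the first item gives the recursion
  f(x # L) = u x * w x + (1 - u x) * f(L), so f(L) is a convex combination of the weights
  of L as soon as the last item is taken with probability 1. Hence f(L) is bounded by the
  first (largest) weight of a sorted L, and raising u at the head item x moves mass from
  f(tail) to w x, which cannot decrease the value; induction on L does the rest.\<close>

lemma f_val_Nil [simp]: "f_val [] u w = 0"
  by (simp add: f_val_def)

lemma f_val_Cons [simp]: "f_val (x # L) u w = u x * w x + (1 - u x) * f_val L u w"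
proof -
  have "f_val (x # L) u w
      = u x * w x + (\<Sum>i<length L. (\<Prod>j<Suc i. 1 - u ((x # L) ! j)) * u (L ! i) * w (L ! i))"
    unfolding f_val_def length_Cons by (subst sum.lessThan_Suc_shift) simp
  also have "\<dots> = u x * w x + (\<Sum>i<length L. (1 - u x) * ((\<Prod>j<i. 1 - u (L ! j)) * u (L ! i) * w (L ! i)))"
    by (subst prod.lessThan_Suc_shift) (simp add: mult.assoc)
  also have "\<dots> = u x * w x + (1 - u x) * f_val L u w"
    by (simp add: f_val_def sum_distrib_left)
  finally show ?thesis .
qed

lemma f_val_le_bound:
  assumes "L \<noteq> []" and "\<forall>a\<in>set L. 0 \<le> u a \<and> u a \<le> 1" and "u (last L) = 1"
    and "\<forall>a\<in>set L. w a \<le> c"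
  shows "f_val L u w \<le> c"
  using assms
proof (induction L rule: list_nonempty_induct)
  case (single x)
  then show ?case by simp
next
  case (cons x L)
  have "f_val L u w \<le> c" and "w x \<le> c" and "0 \<le> u x" and "u x \<le> 1"
    using cons by auto
  then have "u x * w x + (1 - u x) * f_val L u w \<le> u x * c + (1 - u x) * c"
    by (intro add_mono mult_left_mono) auto
  then show ?case by (simp add: algebra_simps)
qed

lemma f_val_mono:
  assumes "L \<noteq> []" and "sorted_wrt (\<lambda>a b. w b \<le> w a) L"
    and "\<forall>a\<in>set L. 0 \<le> ubar a \<and> ubar a \<le> 1" and "\<forall>a\<in>set L. u a \<le> ubar a"
    and "u (last L) = 1"
  shows "f_val L u w \<le> f_val L ubar w"
  using assms
proof (induction L rule: list_nonempty_induct)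
  case (single x)
  then have "ubar x = u x" by (intro antisym) auto
  then show ?case by simp
next
  case (cons x L)
  have ih: "f_val L u w \<le> f_val L ubar w"
    using cons by simp
  have "ubar (last L) = 1"
    using cons.prems(2-4) \<open>L \<noteq> []\<close> by (metis antisym last.simps last_in_set list.set_intros(2))
  then have tail_le_head: "f_val L ubar w \<le> w x"
    using cons by (intro f_val_le_bound) auto
  have "0 \<le> (ubar x - u x) * (w x - f_val L ubar w)"
    using tail_le_head cons.prems by simp
  moreover have "0 \<le> (1 - u x) * (f_val L ubar w - f_val L u w)"
    using ih cons.prems by (simp add: order_trans [of "u x" "ubar x" 1])
  ultimately show ?case by (simp add: algebra_simps)
qed

theorem lemma14:
  fixes R :: "'a set" and abot :: 'a and N m n :: nat
    and xs :: "'a list" and w u ubar :: "'a \<Rightarrow> real"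
  assumes "finite R" and "card R = N" and "abot \<notin> R"
    and "1 \<le> m" and "m \<le> N"
    and "length xs = n" and "1 \<le> n" and "n \<le> m"
    and "distinct xs" and "set xs \<subseteq> R"
    and "\<And>i j. i \<le> j \<Longrightarrow> j < n \<Longrightarrow> w (xs ! i) \<ge> w (xs ! j)"
    and "w (xs ! (n - 1)) \<ge> w abot"
    and "\<And>a. a \<in> insert abot R \<Longrightarrow> 0 \<le> u a \<and> u a \<le> 1"
    and "\<And>a. a \<in> insert abot R \<Longrightarrow> 0 \<le> ubar a \<and> ubar a \<le> 1"
    and "u abot = 1" and "ubar abot = 1"
    and "\<And>a. a \<in> set (xs @ [abot]) \<Longrightarrow> ubar a \<ge> u a"
  shows "f_val (xs @ [abot]) ubar w \<ge> f_val (xs @ [abot]) u w"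
proof (rule f_val_mono)
  have "sorted_wrt (\<lambda>a b. w b \<le> w a) xs"
    using assms(6,11) by (auto simp: sorted_wrt_iff_nth_less)
  moreover have "w abot \<le> w a" if a_in: "a \<in> set xs" for a
  proof -
    obtain i where "i < n" and "a = xs ! i"
      using a_in assms(6) by (auto simp: in_set_conv_nth)
    then have "w (xs ! (n - 1)) \<le> w a"
      using assms(11) [of i "n - 1"] by auto
    then show ?thesis
      using assms(12) by linarith
  qed
  ultimately show "sorted_wrt (\<lambda>a b. w b \<le> w a) (xs @ [abot])"
    by (simp add: sorted_wrt_append)
qed (use assms(10,14-17) in auto)

end
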